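(* Consider group testing with $p$ items, $k=\Theta(p^\theta)$ defectives ($\theta\in(0,1)$), and i.i.d. Bernoulli testing with parameter $\nu>0$ (with reverse $Z$-channel noise). For a defective item $i\in S$ let $M_i$ be the number of tests containing $i$ and no other defective item. Fix $\gamma>0$ and $\Phi\in[0,1)$, and let $c=\Phi\nu e^{-\nu}\gamma\log p$ and $n=\gamma k\log p$. If $\theta>D_1(\Phi)\nu e^{-\nu}\gamma$, then with probability tending to one as $p\to\infty$ there exists a defective item $i\in S$ with $M_i\le c$.
   Context: Setup: unknown defective set $S$ uniform among size-$k$ subsets of $\{1,\dots,p\}$, $p\to\infty$. Test matrix $\mathbf X\in\{0,1\}^{n\times p}$ with i.i.d. Bernoulli$(\nu/k)$ entries ($X_{ij}=1$ iff item $j$ is in test $i$). Outcomes are obtained by passing $\bigvee_{j\in S}X_{ij}$ through the reverse $Z$-channel with parameter $\rho\in(0,1)$ (this does not affect $M_i$). Natural logarithms. $D_\gamma(t)=t\log(t/\gamma)-t+\gamma$ for $\gamma>0$, $t\ge0$. *)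

theory Defs
  imports "HOL-Probability.Probability" "HOL-Library.Landau_Symbols"
begin

text \<open>Relative-entropy type function D_g(t) = t log(t/g) - t + g (note ln 0 = 0, so D_g(0) = g).\<close>
definition Dfun :: "real \<Rightarrow> real \<Rightarrow> real" where
  "Dfun g t = t * ln (t / g) - t + g"

text \<open>Items are 0..p-1, tests 0..n-1. X (t,j) = True iff item j is in test t.\<close>
definition test_matrix_pmf :: "nat \<Rightarrow> nat \<Rightarrow> real \<Rightarrow> (nat \<times> nat \<Rightarrow> bool) pmf" where
  "test_matrix_pmf n p q = Pi_pmf ({..<n} \<times> {..<p}) False (\<lambda>_. bernoulli_pmf q)"

definition defective_set_pmf :: "nat \<Rightarrow> nat \<Rightarrow> nat set pmf" where
  "defective_set_pmf p k = pmf_of_set {S. S \<subseteq> {..<p} \<and> card S = k}"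

definition Mcount :: "nat \<Rightarrow> (nat \<times> nat \<Rightarrow> bool) \<Rightarrow> nat set \<Rightarrow> nat \<Rightarrow> nat" where
  "Mcount n X S i = card {t \<in> {..<n}. X (t, i) \<and> (\<forall>j \<in> S - {i}. \<not> X (t, j))}"

end

(*
  Fix the defective set S, |S| = k.  The rows of the test matrix are i.i.d., and in one test at
  most one defective item can be isolated, so (M_i) for i in S are the counts of k pairwise
  disjoint events in n i.i.d. trials, each of probability r = (nu/k) (1 - nu/k)^(k-1).  Counts of
  disjoint events are negatively dependent: P(M_i > c for all i) <= prod_i P(M_i > c), and
  P(M_i > c) <= 1 - beta with beta = P(Bin(n, r) = floor c).  Hence the failure probability is at
  most (1 - beta)^k <= exp(-k beta).  Now n r ~ a log p with a = gamma nu e^(-nu) and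
  c = Phi a log p, and a Stirling-type lower bound on binomial point probabilities gives
  beta >= p^(-D_a(Phi a) - o(1)) with D_a(Phi a) = a D_1(Phi) < theta, whereas k >= C p^theta;
  so k beta -> infinity.
*)

theory Submission
  imports Defs "HOL-Real_Asymp.Real_Asymp"
begin

lemma measure_pair_pmf:
  "measure_pmf.prob (pair_pmf M N) E =
     measure_pmf.expectation M (\<lambda>x. measure_pmf.prob N (Pair x -` E))"
proof -
  have "pair_pmf M N = bind_pmf M (\<lambda>x. map_pmf (Pair x) N)"
    by (simp add: pair_pmf_def map_pmf_def)
  also have "measure_pmf.prob \<dots> E =
      measure_pmf.expectation M (\<lambda>x. measure_pmf.prob (map_pmf (Pair x) N) E)"
    unfolding measure_pmf_bind
    by (rule measure_pmf.measure_bind[where N="count_space UNIV"])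
       (auto simp: measurable_measure_pmf measure_pmf_in_subprob_space)
  finally show ?thesis
    by (simp add: measure_map_pmf)
qed

lemma expectation_affine_indicator_mult_le:
  fixes v :: "'a \<Rightarrow> real"
  assumes v: "integrable (measure_pmf \<rho>) v" and "0 \<le> \<delta>"
    and on_B: "\<And>y. y \<in> B \<Longrightarrow> v y = v\<^sub>0" and ge: "\<And>y. v\<^sub>0 \<le> v y"
  shows "measure_pmf.expectation \<rho> (\<lambda>y. (u\<^sub>0 + \<delta> * indicator B y) * v y)
     \<le> measure_pmf.expectation \<rho> (\<lambda>y. u\<^sub>0 + \<delta> * indicator B y) * measure_pmf.expectation \<rho> v"
proof -
  let ?E = "measure_pmf.expectation \<rho>" and ?P = "measure_pmf.prob \<rho> B"
  have ind: "integrable (measure_pmf \<rho>) (\<lambda>y. indicator B y :: real)"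
    by (intro measure_pmf.integrable_const_bound[where B=1]) (auto simp: indicator_def)
  have "(\<lambda>y. (u\<^sub>0 + \<delta> * indicator B y) * v y) = (\<lambda>y. u\<^sub>0 * v y + \<delta> * v\<^sub>0 * indicator B y)"
    using on_B by (auto simp: fun_eq_iff indicator_def algebra_simps)
  then have "?E (\<lambda>y. (u\<^sub>0 + \<delta> * indicator B y) * v y) = u\<^sub>0 * ?E v + \<delta> * v\<^sub>0 * ?P"
    using v ind by simp
  also have "\<dots> \<le> u\<^sub>0 * ?E v + \<delta> * ?E v * ?P"
    using measure_pmf.integral_ge_const[OF v AE_pmfI[OF ge]] \<open>0 \<le> \<delta>\<close>
    by (intro add_left_mono mult_right_mono mult_left_mono) auto
  also have "\<dots> = ?E (\<lambda>y. u\<^sub>0 + \<delta> * indicator B y) * ?E v"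
    using ind by (simp add: algebra_simps)
  finally show ?thesis .
qed

lemma map_pmf_curry_Pi_pmf:
  assumes "finite A" "finite B"
  shows "map_pmf (\<lambda>X a b. X (a, b)) (Pi_pmf (A \<times> B) d (\<lambda>_. \<mu>))
       = Pi_pmf A (\<lambda>_. d) (\<lambda>_. Pi_pmf B d (\<lambda>_. \<mu>))"
proof (rule pmf_eqI)
  fix Y :: "'a \<Rightarrow> 'b \<Rightarrow> 'c"
  have "inj (\<lambda>X a b. X (a, b) :: 'c)"
    by (rule injI) (auto simp: fun_eq_iff)
  then have "pmf (map_pmf (\<lambda>X a b. X (a, b)) (Pi_pmf (A \<times> B) d (\<lambda>_. \<mu>))) Y
      = pmf (Pi_pmf (A \<times> B) d (\<lambda>_. \<mu>)) (case_prod Y)"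
    using pmf_map_inj'[of "\<lambda>X a b. X (a, b)" _ "case_prod Y"] by simp
  also have "\<dots> = pmf (Pi_pmf A (\<lambda>_. d) (\<lambda>_. Pi_pmf B d (\<lambda>_. \<mu>))) Y"
  proof (cases "\<forall>a\<in>A. \<forall>b. b \<notin> B \<longrightarrow> Y a b = d")
    case True
    have "(\<Prod>x\<in>A \<times> B. pmf \<mu> (case_prod Y x)) = (\<Prod>a\<in>A. \<Prod>b\<in>B. pmf \<mu> (Y a b))"
      by (simp add: prod.cartesian_product case_prod_beta')
    with True show ?thesis
      using assms by (auto simp: pmf_Pi fun_eq_iff)
  next
    case False
    then show ?thesis
      using assms by (auto simp: pmf_Pi intro: prod_zero)
  qed
  finally show "pmf (map_pmf (\<lambda>X a b. X (a, b)) (Pi_pmf (A \<times> B) d (\<lambda>_. \<mu>))) Y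
      = pmf (Pi_pmf A (\<lambda>_. d) (\<lambda>_. Pi_pmf B d (\<lambda>_. \<mu>))) Y" .
qed

section \<open>Negative dependence of counts of disjoint events\<close>

definition hits :: "nat \<Rightarrow> 'a set \<Rightarrow> (nat \<Rightarrow> 'a) \<Rightarrow> nat" where
  "hits n B f = card {t\<in>{..<n}. f t \<in> B}"

definition exceed_prob ::
    "'a pmf \<Rightarrow> 'a \<Rightarrow> ('i \<Rightarrow> 'a set) \<Rightarrow> nat \<Rightarrow> 'i set \<Rightarrow> ('i \<Rightarrow> real) \<Rightarrow> real" where
  "exceed_prob \<rho> d A n K e =
     measure_pmf.prob (Pi_pmf {..<n} d (\<lambda>_. \<rho>)) {f. \<forall>j\<in>K. e j < real (hits n (A j) f)}"

lemma hits_fun_upd: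
  "hits (Suc n) B (f(n := y)) = hits n B f + (if y \<in> B then 1 else 0)"
proof -
  have "{t\<in>{..<Suc n}. (f(n := y)) t \<in> B} = {t\<in>{..<n}. f t \<in> B} \<union> (if y \<in> B then {n} else {})"
    by (auto simp: less_Suc_eq)
  then show ?thesis
    by (simp add: hits_def card_Un_disjoint)
qed

lemma exceed_prob_nonneg: "0 \<le> exceed_prob \<rho> d A n K e"
  and exceed_prob_le_1: "exceed_prob \<rho> d A n K e \<le> 1"
  by (simp_all add: exceed_prob_def)

lemma exceed_prob_0: "exceed_prob \<rho> d A 0 K e = (if \<forall>j\<in>K. e j < 0 then 1 else 0)"
  by (simp add: exceed_prob_def hits_def)

lemma exceed_prob_Suc:
  "exceed_prob \<rho> d A (Suc n) K e =
     measure_pmf.expectation \<rho> (\<lambda>y. exceed_prob \<rho> d A n K (\<lambda>j. e j - indicator (A j) y))"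
proof -
  have "Pi_pmf {..<Suc n} d (\<lambda>_. \<rho>) =
      map_pmf (\<lambda>(y, f). f(n := y)) (pair_pmf \<rho> (Pi_pmf {..<n} d (\<lambda>_. \<rho>)))"
    by (simp add: lessThan_Suc Pi_pmf_insert)
  then show ?thesis
    unfolding exceed_prob_def
    by (simp add: measure_pair_pmf vimage_def hits_fun_upd indicator_def algebra_simps)
qed

lemma exceed_prob_antimono:
  assumes "\<And>j. j \<in> K \<Longrightarrow> e' j \<le> e j"
  shows "exceed_prob \<rho> d A n K e \<le> exceed_prob \<rho> d A n K e'"
  unfolding exceed_prob_def
  by (intro measure_pmf.finite_measure_mono) (auto dest!: bspec intro: le_less_trans[OF assms])

lemma exceed_prob_singleton_cong:
  "e i = e' i \<Longrightarrow> exceed_prob \<rho> d A n {i} e = exceed_prob \<rho> d A n {i} e'"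
  by (simp add: exceed_prob_def)

(* Condition on one trial: its outcome lowers the threshold of i exactly when it lies in A i, and
   then leaves the thresholds of J unchanged, so the two conditional probabilities are oppositely
   monotone in that indicator. *)
lemma exceed_prob_insert_le:
  assumes "\<And>j. j \<in> J \<Longrightarrow> A i \<inter> A j = {}"
  shows "exceed_prob \<rho> d A n (insert i J) e \<le> exceed_prob \<rho> d A n {i} e * exceed_prob \<rho> d A n J e"
proof (induction n arbitrary: e)
  case 0
  then show ?case by (auto simp: exceed_prob_0)
next
  case (Suc n)
  let ?E = "measure_pmf.expectation \<rho>" and ?T = "exceed_prob \<rho> d A n"
  define e' where "e' = (\<lambda>y j. e j - indicator (A j) y)"
  define u\<^sub>0 where "u\<^sub>0 = ?T {i} e"
  define \<delta> where "\<delta> = ?T {i} (\<lambda>j. e j - 1) - u\<^sub>0"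
  define v where "v = (\<lambda>y. ?T J (e' y))"
  have bounded: "integrable (measure_pmf \<rho>) (\<lambda>y. ?T K (e' y))" for K
    by (intro measure_pmf.integrable_const_bound[where B=1])
       (auto simp: exceed_prob_nonneg exceed_prob_le_1)
  have u: "?T {i} (e' y) = u\<^sub>0 + \<delta> * indicator (A i) y" for y
    by (cases "y \<in> A i") (auto simp: u\<^sub>0_def \<delta>_def e'_def intro: exceed_prob_singleton_cong)
  have "exceed_prob \<rho> d A (Suc n) (insert i J) e \<le> ?E (\<lambda>y. ?T {i} (e' y) * v y)"
    unfolding exceed_prob_Suc v_def e'_def
    by (intro integral_mono bounded Suc.IH measure_pmf.integrable_const_bound[where B=1])
       (auto simp: exceed_prob_nonneg exceed_prob_le_1 mult_le_one)
  also have "\<dots> \<le> ?E (\<lambda>y. ?T {i} (e' y)) * ?E v"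
    unfolding u
  proof (rule expectation_affine_indicator_mult_le)
    show "integrable (measure_pmf \<rho>) v" by (simp add: v_def bounded)
    show "0 \<le> \<delta>" by (simp add: \<delta>_def u\<^sub>0_def exceed_prob_antimono)
    show "v y = ?T J e" if "y \<in> A i" for y
      using that assms unfolding v_def e'_def exceed_prob_def
      by (intro arg_cong[where f="measure_pmf.prob _"]) (auto simp: indicator_def)
    show "?T J e \<le> v y" for y
      by (simp add: v_def e'_def exceed_prob_antimono)
  qed
  also have "\<dots> = exceed_prob \<rho> d A (Suc n) {i} e * exceed_prob \<rho> d A (Suc n) J e"
    by (simp add: exceed_prob_Suc e'_def v_def)
  finally show ?case .
qed

lemma exceed_prob_le_prod:
  assumes "finite K" "pairwise (\<lambda>i j. A i \<inter> A j = {}) K"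
  shows "exceed_prob \<rho> d A n K e \<le> (\<Prod>j\<in>K. exceed_prob \<rho> d A n {j} e)"
  using assms
proof (induction K rule: finite_induct)
  case (insert i J)
  have "exceed_prob \<rho> d A n (insert i J) e \<le> exceed_prob \<rho> d A n {i} e * exceed_prob \<rho> d A n J e"
    using insert.hyps insert.prems by (intro exceed_prob_insert_le) (auto simp: pairwise_insert)
  also have "\<dots> \<le> exceed_prob \<rho> d A n {i} e * (\<Prod>j\<in>J. exceed_prob \<rho> d A n {j} e)"
    using insert.IH insert.prems
    by (intro mult_left_mono) (auto simp: exceed_prob_nonneg pairwise_insert)
  finally show ?case
    using insert.hyps by simp
qed (simp add: exceed_prob_le_1)

lemma map_pmf_hits_Pi_pmf:
  "map_pmf (hits n B) (Pi_pmf {..<n} d (\<lambda>_. \<rho>)) = binomial_pmf n (measure_pmf.prob \<rho> B)"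
proof -
  have mem: "map_pmf (\<lambda>y. y \<in> B) \<rho> = bernoulli_pmf (measure_pmf.prob \<rho> B)"
  proof (rule pmf_eqI)
    fix b :: bool
    have "(\<lambda>y. y \<in> B) -` {False} = UNIV - B" by auto
    then show "pmf (map_pmf (\<lambda>y. y \<in> B) \<rho>) b = pmf (bernoulli_pmf (measure_pmf.prob \<rho> B)) b"
      using measure_pmf.prob_compl[of B \<rho>] by (cases b) (simp_all add: pmf_map vimage_def)
  qed
  have "map_pmf (hits n B) (Pi_pmf {..<n} d (\<lambda>_. \<rho>))
      = map_pmf (\<lambda>f. card {t\<in>{..<n}. f t})
          (map_pmf (\<lambda>f. (\<lambda>y. y \<in> B) \<circ> f) (Pi_pmf {..<n} d (\<lambda>_. \<rho>)))"
    by (simp add: pmf.map_comp o_def hits_def[abs_def])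
  also have "\<dots> = map_pmf (\<lambda>f. card {t\<in>{..<n}. f t})
      (Pi_pmf {..<n} (d \<in> B) (\<lambda>_. bernoulli_pmf (measure_pmf.prob \<rho> B)))"
    by (subst Pi_pmf_map[symmetric]) (auto simp: mem)
  also have "\<dots> = binomial_pmf n (measure_pmf.prob \<rho> B)"
    by (rule binomial_pmf_altdef'[symmetric]) auto
  finally show ?thesis .
qed

lemma exceed_prob_singleton_le:
  assumes "real m \<le> e j"
  shows "exceed_prob \<rho> d A n {j} e \<le> 1 - pmf (binomial_pmf n (measure_pmf.prob \<rho> (A j))) m"
proof -
  let ?P = "Pi_pmf {..<n} d (\<lambda>_. \<rho>)"
  have "pmf (binomial_pmf n (measure_pmf.prob \<rho> (A j))) m =
      measure_pmf.prob ?P (hits n (A j) -` {m})"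
    by (subst map_pmf_hits_Pi_pmf[symmetric]) (rule pmf_map)
  also have "\<dots> \<le> measure_pmf.prob ?P (UNIV - {f. e j < real (hits n (A j) f)})"
    using assms by (intro measure_pmf.finite_measure_mono) auto
  also have "\<dots> = 1 - exceed_prob \<rho> d A n {j} e"
    using measure_pmf.prob_compl[of _ ?P] by (simp add: exceed_prob_def)
  finally show ?thesis by simp
qed

section \<open>Tests isolating a defective item\<close>

lemma prob_isolated_in_row:
  fixes p :: nat
  assumes "S \<subseteq> {..<p}" "i \<in> S" "0 \<le> q" "q \<le> 1"
  shows "measure_pmf.prob (Pi_pmf {..<p} False (\<lambda>_. bernoulli_pmf q)) {x. x i \<and> (\<forall>j\<in>S - {i}. \<not> x j)}
       = q * (1 - q) ^ (card S - 1)"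
proof -
  define B where "B j = (if j = i then {True} else if j \<in> S then {False} else UNIV)" for j
  have "{x. x i \<and> (\<forall>j\<in>S - {i}. \<not> x j)} = Pi {..<p} B"
  proof (intro set_eqI iffI)
    fix x assume "x \<in> Pi {..<p} B"
    then have x: "x j \<in> B j" if "j \<in> S" for j
      using that assms(1) by blast
    show "x \<in> {x. x i \<and> (\<forall>j\<in>S - {i}. \<not> x j)}"
      using x[of i] x assms(2) by (force simp: B_def)
  qed (auto simp: B_def)
  moreover have "measure_pmf.prob (bernoulli_pmf q) (B j) =
      (if j = i then q else if j \<in> S then 1 - q else 1)" for j
    using assms(3,4) by (simp add: B_def measure_pmf_single)
  moreover have "(\<Prod>j\<in>{..<p}. if j = i then q else if j \<in> S then 1 - q else 1) =
      q * (1 - q) ^ (card S - 1)"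
  proof -
    have "finite S" using assms(1) finite_subset by blast
    have "(\<Prod>j\<in>{..<p}. if j = i then q else if j \<in> S then 1 - q else 1)
        = (\<Prod>j\<in>S. if j = i then q else 1 - q)"
      using assms(1,2) by (intro prod.mono_neutral_cong_right) auto
    also have "\<dots> = q * (1 - q) ^ (card S - 1)"
      using assms(2) \<open>finite S\<close> by (simp add: prod.remove[of S i] card_Diff_singleton)
    finally show ?thesis .
  qed
  ultimately show ?thesis
    by (simp add: measure_Pi_pmf_Pi)
qed

lemma prob_exists_Mcount_le_given_set:
  fixes p :: nat
  assumes S: "S \<subseteq> {..<p}" "card S = k" and q: "0 \<le> q" "q \<le> 1" and "real m \<le> c"
  shows "1 - (1 - pmf (binomial_pmf n (q * (1 - q) ^ (k - 1))) m) ^ k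
     \<le> measure_pmf.prob (test_matrix_pmf n p q) {X. \<exists>i\<in>S. real (Mcount n X S i) \<le> c}"
proof -
  define \<rho> where "\<rho> = Pi_pmf {..<p} False (\<lambda>_. bernoulli_pmf q)"
  define A where "A i = {x. x i \<and> (\<forall>j\<in>S - {i}. \<not> x j)}" for i
  define \<beta> where "\<beta> = pmf (binomial_pmf n (q * (1 - q) ^ (k - 1))) m"
  have rows: "map_pmf (\<lambda>X t j. X (t, j)) (test_matrix_pmf n p q) =
      Pi_pmf {..<n} (\<lambda>_. False) (\<lambda>_. \<rho>)"
    unfolding test_matrix_pmf_def \<rho>_def by (rule map_pmf_curry_Pi_pmf) auto
  have "measure_pmf.prob (test_matrix_pmf n p q) {X. \<exists>i\<in>S. real (Mcount n X S i) \<le> c}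
      = measure_pmf.prob (Pi_pmf {..<n} (\<lambda>_. False) (\<lambda>_. \<rho>))
          (UNIV - {f. \<forall>i\<in>S. c < real (hits n (A i) f)})"
    unfolding rows[symmetric]
    by (auto simp: Mcount_def hits_def A_def not_less intro!: arg_cong[where f="measure_pmf.prob _"])
  also have "\<dots> = 1 - exceed_prob \<rho> (\<lambda>_. False) A n S (\<lambda>_. c)"
    using measure_pmf.prob_compl[of _ "Pi_pmf {..<n} (\<lambda>_. False) (\<lambda>_. \<rho>)"]
    by (simp add: exceed_prob_def)
  finally have eq: "measure_pmf.prob (test_matrix_pmf n p q) {X. \<exists>i\<in>S. real (Mcount n X S i) \<le> c}
      = 1 - exceed_prob \<rho> (\<lambda>_. False) A n S (\<lambda>_. c)" .
  have "exceed_prob \<rho> (\<lambda>_. False) A n S (\<lambda>_. c) \<le> (\<Prod>i\<in>S. exceed_prob \<rho> (\<lambda>_. False) A n {i} (\<lambda>_. c))"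
    using S by (intro exceed_prob_le_prod) (auto simp: A_def pairwise_def finite_subset)
  also have "\<dots> \<le> (\<Prod>i\<in>S. 1 - \<beta>)"
  proof (intro prod_mono conjI exceed_prob_nonneg)
    fix i assume "i \<in> S"
    then have "measure_pmf.prob \<rho> (A i) = q * (1 - q) ^ (k - 1)"
      using prob_isolated_in_row[OF S(1) _ q] S(2) by (simp add: \<rho>_def A_def)
    then show "exceed_prob \<rho> (\<lambda>_. False) A n {i} (\<lambda>_. c) \<le> 1 - \<beta>"
      using exceed_prob_singleton_le[of m "\<lambda>_. c" i \<rho> "\<lambda>_. False" A n] \<open>real m \<le> c\<close>
      by (simp only: \<beta>_def)
  qed
  finally show ?thesis
    using eq S(2) by (simp add: \<beta>_def)
qed

lemma one_minus_pow_le_exp: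
  fixes \<beta> :: real
  assumes "\<beta> \<le> 1"
  shows "(1 - \<beta>) ^ k \<le> exp (- (real k * \<beta>))"
proof -
  have "(1 - \<beta>) ^ k \<le> exp (- \<beta>) ^ k"
    using assms exp_ge_add_one_self[of "- \<beta>"] by (intro power_mono) auto
  then show ?thesis
    by (simp add: exp_of_nat_mult[symmetric])
qed

lemma prob_exists_Mcount_le:
  assumes "k \<le> p" "0 \<le> q" "q \<le> 1" "0 \<le> c"
  shows "1 - exp (- (real k * pmf (binomial_pmf n (q * (1 - q) ^ (k - 1))) (nat \<lfloor>c\<rfloor>)))
     \<le> measure_pmf.prob (pair_pmf (defective_set_pmf p k) (test_matrix_pmf n p q))
          {(S, X). \<exists>i\<in>S. real (Mcount n X S i) \<le> c}"
proof -
  let ?\<beta> = "pmf (binomial_pmf n (q * (1 - q) ^ (k - 1))) (nat \<lfloor>c\<rfloor>)"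
  define Sets where "Sets = {S. S \<subseteq> {..<p} \<and> card S = k}"
  have "finite Sets" "Sets \<noteq> {}"
    using \<open>k \<le> p\<close>
    by (auto simp: Sets_def finite_subset[of _ "Pow {..<p}"] intro!: exI[of _ "{..<k}"])
  have "1 - exp (- (real k * ?\<beta>)) \<le> 1 - (1 - ?\<beta>) ^ k"
    using one_minus_pow_le_exp[of ?\<beta> k] by (simp add: pmf_le_1)
  also have "\<dots> \<le> measure_pmf.expectation (pmf_of_set Sets)
      (\<lambda>S. measure_pmf.prob (test_matrix_pmf n p q) {X. \<exists>i\<in>S. real (Mcount n X S i) \<le> c})"
  proof (intro measure_pmf.integral_ge_const AE_pmfI)
    show "integrable (measure_pmf (pmf_of_set Sets))
        (\<lambda>S. measure_pmf.prob (test_matrix_pmf n p q) {X. \<exists>i\<in>S. real (Mcount n X S i) \<le> c})"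
      by (intro measure_pmf.integrable_const_bound[where B=1]) auto
    show "1 - (1 - ?\<beta>) ^ k \<le>
        measure_pmf.prob (test_matrix_pmf n p q) {X. \<exists>i\<in>S. real (Mcount n X S i) \<le> c}"
      if "S \<in> set_pmf (pmf_of_set Sets)" for S
      using that \<open>finite Sets\<close> \<open>Sets \<noteq> {}\<close> assms(2-4)
      by (intro prob_exists_Mcount_le_given_set) (auto simp: Sets_def of_nat_nat)
  qed
  finally show ?thesis
    by (simp add: measure_pair_pmf defective_set_pmf_def Sets_def vimage_def)
qed

section \<open>Point probabilities of the binomial distribution\<close>

lemma fact_le_Suc_pow_exp: "fact m \<le> (real m + 1) ^ (m + 1) * exp (- real m)"
proof (induction m)
  case (Suc m)
  define y where "y = real m + 1"
  have "y > 0" by (simp add: y_def)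
  have "ln (1 - 1 / (y + 1)) \<le> - (1 / (y + 1))"
    using \<open>y > 0\<close> by (intro ln_one_minus_pos_upper_bound) auto
  moreover have "ln (1 - 1 / (y + 1)) = - ln ((y + 1) / y)"
    using \<open>y > 0\<close> by (simp add: field_simps ln_div)
  ultimately have "1 \<le> real (m + 2) * ln ((y + 1) / y)"
    using \<open>y > 0\<close> by (simp add: y_def field_simps)
  then have "exp 1 \<le> ((y + 1) / y) ^ (m + 2)"
    using \<open>y > 0\<close>
    by (metis exp_le_cancel_iff exp_of_nat_mult exp_ln divide_pos_pos add_pos_pos zero_less_one)
  then have key: "exp 1 * y ^ (m + 2) \<le> (y + 1) ^ (m + 2)"
    using \<open>y > 0\<close> by (simp add: power_divide field_simps)
  have "fact (Suc m) = y * fact m"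
    by (simp add: y_def)
  also have "\<dots> \<le> y * (y ^ (m + 1) * exp (- real m))"
    using Suc.IH \<open>y > 0\<close> by (simp add: y_def)
  also have "\<dots> = exp 1 * y ^ (m + 2) * exp (- real (Suc m))"
    by (simp add: exp_diff exp_minus field_simps)
  also have "\<dots> \<le> (y + 1) ^ (m + 2) * exp (- real (Suc m))"
    using key by (intro mult_right_mono) auto
  finally show ?case
    by (simp add: y_def add_ac)
qed simp

lemma pow_le_binomial_mult_fact:
  assumes "m \<le> n"
  shows "(real n - real m) ^ m \<le> real (n choose m) * fact m"
proof -
  have "(real n - real m) ^ m = (\<Prod>i=0..<m. real n - real m)"
    by simp
  also have "\<dots> \<le> (\<Prod>i=0..<m. real n - real i)"
    using assms by (intro prod_mono) auto
  also have "\<dots> = real (n choose m) * fact m"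
    by (simp add: binomial_gbinomial gbinomial_mult_fact')
  finally show ?thesis .
qed

lemma exp_le_one_minus_pow:
  assumes "0 \<le> r" "r < 1"
  shows "exp (- real n * r / (1 - r)) \<le> (1 - r) ^ n"
proof -
  have "ln (1 / (1 - r)) \<le> 1 / (1 - r) - 1"
    using assms by (intro ln_le_minus_one) auto
  then have "- r / (1 - r) \<le> ln (1 - r)"
    using assms by (simp add: ln_div field_simps)
  then have "real n * (- r / (1 - r)) \<le> real n * ln (1 - r)"
    by (rule mult_left_mono) simp
  then have "exp (- real n * r / (1 - r)) \<le> exp (real n * ln (1 - r))"
    by simp
  also have "\<dots> = (1 - r) ^ n"
    using assms by (simp add: exp_of_nat_mult)
  finally show ?thesis .
qed

lemma binomial_pmf_ge_exp:
  assumes "m < n" "0 < r" "r < 1"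
  shows "exp (real m * (ln ((real n - real m) * r / (real m + 1)) + 1) - ln (real m + 1)
              - real n * r / (1 - r))
     \<le> pmf (binomial_pmf n r) m"
proof -
  define x where "x = (real n - real m) * r"
  have "x > 0"
    using assms by (simp add: x_def)
  have "exp (real m * (ln (x / (real m + 1)) + 1) - ln (real m + 1))
      = exp (real m * ln x) / (exp (real (m + 1) * ln (real m + 1)) * exp (- real m))"
    using \<open>x > 0\<close> by (simp add: ln_div exp_diff exp_add exp_minus field_simps)
  also have "\<dots> = x ^ m / ((real m + 1) ^ (m + 1) * exp (- real m))"
    using \<open>x > 0\<close> by (simp only: exp_of_nat_mult exp_ln of_nat_less_0_iff)
  also have "\<dots> \<le> x ^ m / fact m"
    using \<open>x > 0\<close> by (intro divide_left_mono fact_le_Suc_pow_exp) auto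
  also have "\<dots> \<le> real (n choose m) * r ^ m"
    using pow_le_binomial_mult_fact[of m n] assms
    by (simp add: x_def power_mult_distrib divide_le_eq mult_right_mono mult_ac)
  finally have binom:
    "exp (real m * (ln (x / (real m + 1)) + 1) - ln (real m + 1)) \<le> real (n choose m) * r ^ m" .
  have "(1 - r) ^ n \<le> (1 - r) ^ (n - m)"
    using assms by (intro power_decreasing) auto
  then have "exp (- real n * r / (1 - r)) \<le> (1 - r) ^ (n - m)"
    using exp_le_one_minus_pow[of r n] assms by linarith
  with binom have "exp (real m * (ln (x / (real m + 1)) + 1) - ln (real m + 1))
      * exp (- real n * r / (1 - r)) \<le> real (n choose m) * r ^ m * (1 - r) ^ (n - m)"
    using assms by (intro mult_mono) auto
  then show ?thesis
    using assms by (simp add: x_def flip: exp_add)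
qed

lemma Dfun_eq: "0 < a \<Longrightarrow> Dfun a t = a - t * (ln (a / t) + 1)"
  by (cases "t = 0") (simp_all add: Dfun_def ln_div algebra_simps)

lemma tendsto_nat_floor_mult_div:
  assumes L: "filterlim L at_top F" and "0 \<le> t"
  shows "((\<lambda>x. real (nat \<lfloor>t * L x\<rfloor>) / L x) \<longlongrightarrow> t) F"
proof (rule tendsto_sandwich)
  have inv: "((\<lambda>x. inverse (L x)) \<longlongrightarrow> 0) F"
    by (rule tendsto_inverse_0_at_top[OF L])
  show "((\<lambda>x. t - inverse (L x)) \<longlongrightarrow> t) F"
    using tendsto_diff[OF tendsto_const inv, of t] by simp
  show "\<forall>\<^sub>F x in F. t - inverse (L x) \<le> real (nat \<lfloor>t * L x\<rfloor>) / L x"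
    using filterlim_at_top_dense[THEN iffD1, OF L, rule_format, of 0]
  proof eventually_elim
    case (elim x)
    have "t * L x - 1 \<le> real (nat \<lfloor>t * L x\<rfloor>)"
      by linarith
    then have "(t * L x - 1) / L x \<le> real (nat \<lfloor>t * L x\<rfloor>) / L x"
      using elim by (intro divide_right_mono) auto
    then show ?case
      using elim by (simp add: diff_divide_distrib inverse_eq_divide)
  qed
  show "\<forall>\<^sub>F x in F. real (nat \<lfloor>t * L x\<rfloor>) / L x \<le> t"
    using filterlim_at_top_dense[THEN iffD1, OF L, rule_format, of 0]
  proof eventually_elim
    case (elim x)
    have "real (nat \<lfloor>t * L x\<rfloor>) \<le> t * L x"
      using \<open>0 \<le> t\<close> elim by (simp add: of_nat_nat)
    then show ?case
      using elim by (simp add: field_simps)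
  qed
qed simp

lemma tendsto_nat_ceiling_mult_div:
  assumes L: "filterlim L at_top F" and "0 \<le> \<gamma>"
  shows "((\<lambda>x. real (nat \<lceil>\<gamma> * L x\<rceil>) / L x) \<longlongrightarrow> \<gamma>) F"
proof (rule tendsto_sandwich)
  have "\<forall>\<^sub>F x in F. 0 < L x"
    using L by (rule filterlim_at_top_dense[THEN iffD1, rule_format])
  moreover have "\<gamma> * L x \<le> real (nat \<lceil>\<gamma> * L x\<rceil>) \<and> real (nat \<lceil>\<gamma> * L x\<rceil>) \<le> \<gamma> * L x + 1"
    if "0 < L x" for x
    using that \<open>0 \<le> \<gamma>\<close> by (simp add: of_nat_nat le_of_int_ceiling of_int_ceiling_le_add_one)
  ultimately have bounds: "\<forall>\<^sub>F x in F. 0 < L x \<and> \<gamma> * L x \<le> real (nat \<lceil>\<gamma> * L x\<rceil>)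
      \<and> real (nat \<lceil>\<gamma> * L x\<rceil>) \<le> \<gamma> * L x + 1"
    by (auto elim: eventually_mono)
  then show "\<forall>\<^sub>F x in F. \<gamma> \<le> real (nat \<lceil>\<gamma> * L x\<rceil>) / L x"
    by eventually_elim (simp add: le_divide_eq)
  from bounds show "\<forall>\<^sub>F x in F. real (nat \<lceil>\<gamma> * L x\<rceil>) / L x \<le> \<gamma> + 1 / L x"
    by eventually_elim (simp add: divide_le_eq distrib_right)
  show "((\<lambda>x. \<gamma> + 1 / L x) \<longlongrightarrow> \<gamma>) F"
    using tendsto_add[OF tendsto_const tendsto_inverse_0_at_top[OF L], of \<gamma>]
    by (simp add: inverse_eq_divide)
qed simp

lemma tendsto_ln_Suc_nat_floor_div:
  assumes L: "filterlim L at_top F" and "0 \<le> t"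
  shows "((\<lambda>x. ln (real (nat \<lfloor>t * L x\<rfloor>) + 1) / L x) \<longlongrightarrow> 0) F"
proof (rule tendsto_sandwich)
  have L1: "\<forall>\<^sub>F x in F. 1 \<le> L x"
    using L by (simp add: filterlim_at_top)
  then show "\<forall>\<^sub>F x in F. 0 \<le> ln (real (nat \<lfloor>t * L x\<rfloor>) + 1) / L x"
    by eventually_elim simp
  show "\<forall>\<^sub>F x in F. ln (real (nat \<lfloor>t * L x\<rfloor>) + 1) / L x \<le> ln (t + 1) * (1 / L x) + ln (L x) / L x"
    using L1
  proof eventually_elim
    case (elim x)
    have "real (nat \<lfloor>t * L x\<rfloor>) \<le> t * L x"
      using elim \<open>0 \<le> t\<close> by (simp add: of_nat_nat)
    then have "real (nat \<lfloor>t * L x\<rfloor>) + 1 \<le> (t + 1) * L x"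
      using elim by (simp add: algebra_simps)
    then have "ln (real (nat \<lfloor>t * L x\<rfloor>) + 1) \<le> ln ((t + 1) * L x)"
      by (intro ln_mono) auto
    also have "\<dots> = ln (t + 1) + ln (L x)"
      using elim \<open>0 \<le> t\<close> by (simp add: ln_mult)
    finally show ?case
      using elim by (simp flip: add_divide_distrib add: divide_right_mono)
  qed
  have "((\<lambda>y. ln (t + 1) * (1 / y) + ln y / y) \<longlongrightarrow> 0) at_top"
    by real_asymp
  then show "((\<lambda>x. ln (t + 1) * (1 / L x) + ln (L x) / L x) \<longlongrightarrow> 0) F"
    by (rule filterlim_compose[OF _ L])
qed simp

lemma tendsto_mult_ln_div_Suc:
  fixes m :: "'a \<Rightarrow> nat"
  assumes L: "filterlim L at_top F" and mL: "((\<lambda>x. real (m x) / L x) \<longlongrightarrow> t) F"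
    and yL: "((\<lambda>x. y x / L x) \<longlongrightarrow> a) F" and "0 < t" "0 < a"
  shows "((\<lambda>x. real (m x) * (ln (y x / (real (m x) + 1)) + 1) / L x) \<longlongrightarrow> t * (ln (a / t) + 1)) F"
proof -
  have "((\<lambda>x. real (m x) / L x + 1 / L x) \<longlongrightarrow> t) F"
    using tendsto_add[OF mL tendsto_inverse_0_at_top[OF L]] by (simp add: inverse_eq_divide)
  then have "((\<lambda>x. real (m x) / L x * (ln ((y x / L x) / (real (m x) / L x + 1 / L x)) + 1))
      \<longlongrightarrow> t * (ln (a / t) + 1)) F"
    using assms(4,5)
    by (intro tendsto_mult[OF mL] tendsto_add[OF tendsto_ln] tendsto_divide yL) auto
  moreover have "\<forall>\<^sub>F x in F. 0 < L x"
    using L by (rule filterlim_at_top_dense[THEN iffD1, rule_format])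
  then have "\<forall>\<^sub>F x in F. real (m x) / L x * (ln ((y x / L x) / (real (m x) / L x + 1 / L x)) + 1)
      = real (m x) * (ln (y x / (real (m x) + 1)) + 1) / L x"
    by eventually_elim (simp flip: add_divide_distrib)
  ultimately show ?thesis
    by (rule Lim_transform_eventually)
qed

lemma tendsto_binomial_exponent:
  fixes n m :: "'a \<Rightarrow> nat" and r L :: "'a \<Rightarrow> real"
  assumes L: "filterlim L at_top F" and nr: "((\<lambda>x. real (n x) * r x / L x) \<longlongrightarrow> a) F"
    and r: "(r \<longlongrightarrow> 0) F" and "0 \<le> t" "0 < a" and m: "\<And>x. m x = nat \<lfloor>t * L x\<rfloor>"
  shows "((\<lambda>x. (real (m x) * (ln ((real (n x) - real (m x)) * r x / (real (m x) + 1)) + 1)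
             - ln (real (m x) + 1) - real (n x) * r x / (1 - r x)) / L x) \<longlongrightarrow> - Dfun a t) F"
proof -
  have mL: "((\<lambda>x. real (m x) / L x) \<longlongrightarrow> t) F"
    unfolding m by (rule tendsto_nat_floor_mult_div[OF L \<open>0 \<le> t\<close>])
  have "((\<lambda>x. real (n x) * r x / L x - real (m x) / L x * r x) \<longlongrightarrow> a - t * 0) F"
    by (intro tendsto_intros nr mL r)
  then have xL: "((\<lambda>x. (real (n x) - real (m x)) * r x / L x) \<longlongrightarrow> a) F"
    by (simp add: left_diff_distrib diff_divide_distrib)
  have main: "((\<lambda>x. real (m x) * (ln ((real (n x) - real (m x)) * r x / (real (m x) + 1)) + 1)
      / L x) \<longlongrightarrow> t * (ln (a / t) + 1)) F"
    using tendsto_mult_ln_div_Suc[OF L mL xL] \<open>0 \<le> t\<close> \<open>0 < a\<close>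
    by (cases "t = 0") (simp_all add: m)
  have lnm: "((\<lambda>x. ln (real (m x) + 1) / L x) \<longlongrightarrow> 0) F"
    unfolding m by (rule tendsto_ln_Suc_nat_floor_div[OF L \<open>0 \<le> t\<close>])
  have "((\<lambda>x. real (n x) * r x / L x / (1 - r x)) \<longlongrightarrow> a / (1 - 0)) F"
    by (intro tendsto_divide tendsto_diff nr r tendsto_const) simp
  from tendsto_diff[OF tendsto_diff[OF main lnm] this[simplified]]
  show ?thesis
    using \<open>0 < a\<close> by (simp add: Dfun_eq diff_divide_distrib mult.commute)
qed

lemma eventually_binomial_pmf_nat_floor_ge:
  fixes n :: "'a \<Rightarrow> nat" and r L :: "'a \<Rightarrow> real"
  assumes L: "filterlim L at_top F" and nr: "((\<lambda>x. real (n x) * r x / L x) \<longlongrightarrow> a) F"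
    and r: "(r \<longlongrightarrow> 0) F" "\<forall>\<^sub>F x in F. 0 < r x" and t: "0 \<le> t" "t < a" and "0 < \<epsilon>"
  shows "\<forall>\<^sub>F x in F. exp (- (Dfun a t + \<epsilon>) * L x) \<le> pmf (binomial_pmf (n x) (r x)) (nat \<lfloor>t * L x\<rfloor>)"
proof -
  define m where "m x = nat \<lfloor>t * L x\<rfloor>" for x
  define g where "g x = real (m x) * (ln ((real (n x) - real (m x)) * r x / (real (m x) + 1)) + 1)
    - ln (real (m x) + 1) - real (n x) * r x / (1 - r x)" for x
  have "((\<lambda>x. g x / L x) \<longlongrightarrow> - Dfun a t) F"
    unfolding g_def using t by (intro tendsto_binomial_exponent[OF L nr r(1)] m_def) auto
  then have "\<forall>\<^sub>F x in F. - Dfun a t - \<epsilon> < g x / L x"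
    by (rule order_tendstoD) (use \<open>0 < \<epsilon>\<close> in simp)
  moreover have "\<forall>\<^sub>F x in F. t < real (n x) * r x / L x"
    using nr t(2) by (rule order_tendstoD)
  moreover have "\<forall>\<^sub>F x in F. r x < 1"
    using r(1) by (rule order_tendstoD) simp
  moreover have "\<forall>\<^sub>F x in F. 0 < L x"
    using L by (rule filterlim_at_top_dense[THEN iffD1, rule_format])
  ultimately show ?thesis
    using r(2)
  proof eventually_elim
    case (elim x)
    have "real (m x) \<le> t * L x"
      using elim t by (simp add: m_def of_nat_nat)
    also have "\<dots> < real (n x) * r x"
      using elim by (simp add: field_simps)
    also have "\<dots> \<le> real (n x)"
      using elim by (simp add: mult_left_le)
    finally have "m x < n x"
      by simp
    have "- (Dfun a t + \<epsilon>) * L x \<le> g x"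
      using elim by (simp add: field_simps)
    then have "exp (- (Dfun a t + \<epsilon>) * L x) \<le> exp (g x)"
      by simp
    also have "\<dots> \<le> pmf (binomial_pmf (n x) (r x)) (m x)"
      unfolding g_def using \<open>m x < n x\<close> elim by (intro binomial_pmf_ge_exp) auto
    finally show ?case
      by (simp add: m_def)
  qed
qed

section \<open>Asymptotics of the test design\<close>

lemma tendsto_one_minus_div_pow_pred:
  fixes k :: "'a \<Rightarrow> nat"
  assumes k: "filterlim k at_top F"
  shows "((\<lambda>x. (1 - \<nu> / real (k x)) ^ (k x - 1)) \<longlongrightarrow> exp (- \<nu>)) F"
proof -
  have K: "filterlim (\<lambda>x. real (k x)) at_top F"
    by (rule filterlim_compose[OF filterlim_real_sequentially k])
  have "((\<lambda>x. (1 + (- \<nu>) / real (k x)) ^ k x) \<longlongrightarrow> exp (- \<nu>)) F"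
    by (rule filterlim_compose[OF tendsto_exp_limit_sequentially k])
  moreover have "((\<lambda>x. 1 - \<nu> * inverse (real (k x))) \<longlongrightarrow> 1 - \<nu> * 0) F"
    by (intro tendsto_intros tendsto_inverse_0_at_top K)
  ultimately have "((\<lambda>x. (1 - \<nu> / real (k x)) ^ k x / (1 - \<nu> / real (k x))) \<longlongrightarrow> exp (- \<nu>) / 1) F"
    by (intro tendsto_divide) (simp_all add: field_simps)
  moreover have "\<forall>\<^sub>F x in F. \<bar>\<nu>\<bar> < real (k x)"
    using K by (rule filterlim_at_top_dense[THEN iffD1, rule_format])
  then have "\<forall>\<^sub>F x in F.
      (1 - \<nu> / real (k x)) ^ k x / (1 - \<nu> / real (k x)) = (1 - \<nu> / real (k x)) ^ (k x - 1)"
  proof eventually_elim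
    case (elim x)
    then have "1 - \<nu> / real (k x) \<noteq> 0" "k x = Suc (k x - 1)"
      by (auto simp: field_simps)
    then show ?case
      by (metis nonzero_mult_div_cancel_left power_Suc)
  qed
  ultimately show ?thesis
    by (simp add: Lim_transform_eventually)
qed

lemma isolation_prob_asymptotics:
  fixes k n :: "nat \<Rightarrow> nat"
  assumes K: "filterlim (\<lambda>p. real (k p)) at_top at_top" and "0 < \<nu>" "0 < \<gamma>"
    and n: "\<And>p. n p = nat \<lceil>\<gamma> * real (k p) * ln (real p)\<rceil>"
    and r_def: "\<And>p. r p = \<nu> / real (k p) * (1 - \<nu> / real (k p)) ^ (k p - 1)"
  shows "\<forall>\<^sub>F p in at_top. 0 < r p" "(r \<longlongrightarrow> 0) at_top"
    and "((\<lambda>p. real (n p) * r p / ln (real p)) \<longlongrightarrow> \<nu> * exp (- \<nu>) * \<gamma>) at_top"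
proof -
  have k: "filterlim k at_top at_top"
    using K by (simp add: filterlim_sequentially_iff_filterlim_real)
  have KL: "filterlim (\<lambda>p. real (k p) * ln (real p)) at_top at_top"
    by (intro filterlim_at_top_mult_at_top K) real_asymp
  have K\<nu>: "\<forall>\<^sub>F p in at_top. \<nu> < real (k p)"
    using K by (rule filterlim_at_top_dense[THEN iffD1, rule_format])
  then show "\<forall>\<^sub>F p in at_top. 0 < r p"
    by eventually_elim (use \<open>0 < \<nu>\<close> in \<open>auto simp: r_def field_simps\<close>)
  have "((\<lambda>p. \<nu> * (1 - \<nu> / real (k p)) ^ (k p - 1)) \<longlongrightarrow> \<nu> * exp (- \<nu>)) at_top"
    by (intro tendsto_mult tendsto_const tendsto_one_minus_div_pow_pred k)
  moreover have "\<forall>\<^sub>F p in at_top. \<nu> * (1 - \<nu> / real (k p)) ^ (k p - 1) = real (k p) * r p"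
    using K\<nu> by eventually_elim (use \<open>0 < \<nu>\<close> in \<open>simp add: r_def\<close>)
  ultimately have kr: "((\<lambda>p. real (k p) * r p) \<longlongrightarrow> \<nu> * exp (- \<nu>)) at_top"
    by (rule Lim_transform_eventually)
  have "((\<lambda>p. real (k p) * r p * inverse (real (k p))) \<longlongrightarrow> \<nu> * exp (- \<nu>) * 0) at_top"
    by (intro tendsto_mult kr tendsto_inverse_0_at_top K)
  moreover have "\<forall>\<^sub>F p in at_top. real (k p) * r p * inverse (real (k p)) = r p"
    using K\<nu> by eventually_elim (use \<open>0 < \<nu>\<close> in auto)
  ultimately show "(r \<longlongrightarrow> 0) at_top"
    by (simp add: Lim_transform_eventually)
  have "((\<lambda>p. real (n p) / (real (k p) * ln (real p))) \<longlongrightarrow> \<gamma>) at_top"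
    using tendsto_nat_ceiling_mult_div[OF KL, of \<gamma>] \<open>0 < \<gamma>\<close> by (simp add: n mult.assoc)
  from tendsto_mult[OF kr this]
  have "((\<lambda>p. real (k p) * r p * (real (n p) / (real (k p) * ln (real p))))
      \<longlongrightarrow> \<nu> * exp (- \<nu>) * \<gamma>) at_top" .
  moreover have "\<forall>\<^sub>F p in at_top. real (k p) * r p * (real (n p) / (real (k p) * ln (real p)))
      = real (n p) * r p / ln (real p)"
    using K\<nu> by eventually_elim (use \<open>0 < \<nu>\<close> in simp)
  ultimately show "((\<lambda>p. real (n p) * r p / ln (real p)) \<longlongrightarrow> \<nu> * exp (- \<nu>) * \<gamma>) at_top"
    by (rule Lim_transform_eventually)
qed

lemma bigtheta_powr_bounds:
  fixes k :: "nat \<Rightarrow> nat"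
  assumes "(\<lambda>p. real (k p)) \<in> \<Theta>(\<lambda>p. real p powr \<theta>)" "0 < \<theta>" "\<theta> < 1"
  obtains C where "0 < C" "\<forall>\<^sub>F p in at_top. C * real p powr \<theta> \<le> real (k p)"
    and "\<forall>\<^sub>F p in at_top. k p \<le> p"
    and "filterlim (\<lambda>p. real (k p)) at_top at_top"
proof -
  obtain C where C: "0 < C" "\<forall>\<^sub>F p in at_top. C * real p powr \<theta> \<le> real (k p)"
    using bigthetaD2[OF assms(1)] by (elim landau_omega.bigE) auto
  moreover have "filterlim (\<lambda>p. real (k p)) at_top at_top"
    by (rule filterlim_at_top_mono[OF _ C(2)]) (use C(1) \<open>0 < \<theta>\<close> in real_asymp)
  moreover obtain C' where C': "\<forall>\<^sub>F p in at_top. real (k p) \<le> C' * real p powr \<theta>"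
    using bigthetaD1[OF assms(1)] by (elim landau_o.bigE) auto
  have "\<forall>\<^sub>F p in at_top. C' * real p powr \<theta> < real p"
  proof -
    have "((\<lambda>p::nat. C' * real p powr \<theta> / real p) \<longlongrightarrow> 0) at_top"
      using \<open>\<theta> < 1\<close> by real_asymp
    then have "\<forall>\<^sub>F p in at_top. C' * real p powr \<theta> / real p < 1"
      by (rule order_tendstoD) simp
    with eventually_gt_at_top[of 0] show ?thesis
      by eventually_elim (simp add: divide_less_eq)
  qed
  with C' have "\<forall>\<^sub>F p in at_top. k p \<le> p"
    by eventually_elim simp
  ultimately show ?thesis
    using that by blast
qed

lemma filterlim_mult_at_top_powr_bounds:
  fixes K \<beta> :: "nat \<Rightarrow> real"
  assumes "0 < C" "\<eta> < \<theta>"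
    and K: "\<forall>\<^sub>F p in at_top. C * real p powr \<theta> \<le> K p"
    and \<beta>: "\<forall>\<^sub>F p in at_top. exp (- \<eta> * ln (real p)) \<le> \<beta> p"
  shows "filterlim (\<lambda>p. K p * \<beta> p) at_top at_top"
proof (rule filterlim_at_top_mono)
  show "filterlim (\<lambda>p::nat. C * exp ((\<theta> - \<eta>) * ln (real p))) at_top at_top"
    using assms(1,2) by real_asymp
  show "\<forall>\<^sub>F p in at_top. C * exp ((\<theta> - \<eta>) * ln (real p)) \<le> K p * \<beta> p"
    using K \<beta> eventually_gt_at_top[of 0]
  proof eventually_elim
    case (elim p)
    have "C * exp ((\<theta> - \<eta>) * ln (real p)) = C * real p powr \<theta> * exp (- \<eta> * ln (real p))"
      using elim by (simp add: powr_def mult.assoc flip: exp_add) (simp add: algebra_simps)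
    also have "\<dots> \<le> K p * \<beta> p"
      using elim \<open>0 < C\<close> order_trans[OF _ elim(1)] by (intro mult_mono) auto
    finally show ?case .
  qed
qed

lemma tendsto_one_of_exp_lower_bound:
  fixes h P :: "'a \<Rightarrow> real"
  assumes "\<forall>\<^sub>F x in F. 1 - exp (- h x) \<le> P x" "\<forall>\<^sub>F x in F. P x \<le> 1" and "filterlim h at_top F"
  shows "(P \<longlongrightarrow> 1) F"
proof (rule tendsto_sandwich)
  show "\<forall>\<^sub>F x in F. 1 - exp (- h x) \<le> P x" "\<forall>\<^sub>F x in F. P x \<le> 1"
    by (fact assms(1,2))+
  have "filterlim (\<lambda>x. - h x) at_bot F"
    using assms(3) by (simp add: filterlim_uminus_at_top)
  then have "((\<lambda>x. exp (- h x)) \<longlongrightarrow> 0) F"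
    by (rule filterlim_compose[OF exp_at_bot])
  then show "((\<lambda>x. 1 - exp (- h x)) \<longlongrightarrow> 1) F"
    using tendsto_diff[OF tendsto_const, of _ 0 F 1] by simp
qed simp

lemma Dfun_scale: "0 < a \<Longrightarrow> Dfun a (\<Phi> * a) = a * Dfun 1 \<Phi>"
  by (simp add: Dfun_def algebra_simps)

theorem lemma2:
  fixes \<theta> \<nu> \<gamma> \<Phi> :: real and k n :: "nat \<Rightarrow> nat"
  assumes "0 < \<theta>" "\<theta> < 1"
    and "(\<lambda>p. real (k p)) \<in> \<Theta>(\<lambda>p. real p powr \<theta>)"
    and "0 < \<nu>" "0 < \<gamma>" "0 \<le> \<Phi>" "\<Phi> < 1"
    and "\<And>p. n p = nat \<lceil>\<gamma> * real (k p) * ln (real p)\<rceil>"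
    and "\<theta> > Dfun 1 \<Phi> * \<nu> * exp (- \<nu>) * \<gamma>"
  shows "((\<lambda>p. measure_pmf.prob
            (pair_pmf (defective_set_pmf p (k p)) (test_matrix_pmf (n p) p (\<nu> / real (k p))))
            {(S, X). \<exists>i \<in> S. real (Mcount (n p) X S i) \<le> \<Phi> * \<nu> * exp (- \<nu>) * \<gamma> * ln (real p)})
         \<longlongrightarrow> 1) at_top"
proof -
  define a where "a = \<nu> * exp (- \<nu>) * \<gamma>"
  define r where "r p = \<nu> / real (k p) * (1 - \<nu> / real (k p)) ^ (k p - 1)" for p
  define \<beta> where
    "\<beta> p = pmf (binomial_pmf (n p) (r p)) (nat \<lfloor>\<Phi> * \<nu> * exp (- \<nu>) * \<gamma> * ln (real p)\<rfloor>)" for p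
  define \<delta> where "\<delta> = (\<theta> - Dfun a (\<Phi> * a)) / 2"
  have "0 < a" "0 < \<delta>"
    using assms(4,5,9) by (simp_all add: a_def \<delta>_def Dfun_scale mult_ac)
  obtain C where C: "0 < C" "\<forall>\<^sub>F p in at_top. C * real p powr \<theta> \<le> real (k p)"
    "\<forall>\<^sub>F p in at_top. k p \<le> p" and K: "filterlim (\<lambda>p. real (k p)) at_top at_top"
    using bigtheta_powr_bounds[OF assms(3,1,2)] .
  note r = isolation_prob_asymptotics[OF K assms(4,5,8) r_def, folded a_def]
  have L: "filterlim (\<lambda>p::nat. ln (real p)) at_top at_top"
    by real_asymp
  have t: "\<Phi> * \<nu> * exp (- \<nu>) * \<gamma> = \<Phi> * a"
    by (simp add: a_def mult.assoc)
  have \<beta>: "\<forall>\<^sub>F p in at_top. exp (- (Dfun a (\<Phi> * a) + \<delta>) * ln (real p)) \<le> \<beta> p"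
    unfolding \<beta>_def t using assms(6,7) \<open>0 < a\<close> \<open>0 < \<delta>\<close>
    by (intro eventually_binomial_pmf_nat_floor_ge[OF L r(3,2,1)]) auto
  have "filterlim (\<lambda>p. real (k p) * \<beta> p) at_top at_top"
    by (rule filterlim_mult_at_top_powr_bounds[OF C(1) _ C(2) \<beta>])
       (use \<open>0 < \<delta>\<close> in \<open>simp add: \<delta>_def field_simps\<close>)
  moreover have "\<forall>\<^sub>F p in at_top. 1 - exp (- (real (k p) * \<beta> p)) \<le> measure_pmf.prob
            (pair_pmf (defective_set_pmf p (k p)) (test_matrix_pmf (n p) p (\<nu> / real (k p))))
            {(S, X). \<exists>i \<in> S. real (Mcount (n p) X S i) \<le> \<Phi> * \<nu> * exp (- \<nu>) * \<gamma> * ln (real p)}"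
    using C(3) filterlim_at_top_dense[THEN iffD1, OF K, rule_format, of \<nu>]
      eventually_ge_at_top[of "1::nat"]
    unfolding \<beta>_def r_def
    by eventually_elim (intro prob_exists_Mcount_le, use assms(4-6) in auto)
  ultimately show ?thesis
    by (intro tendsto_one_of_exp_lower_bound) auto
qed

end
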